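(* Let $\mathcal{C}\subseteq\mathbb{F}_q^n$ be a linear code of length $n$, dimension $k\ge1$ and minimum distance $d\ge2$, and let $J=n-k-d+2$. Then the average locality of $\mathcal{C}$ satisfies $$\overline{r}\ \ge\ \Big\lceil\frac{k}{J}\Big\rceil\left(1-\frac{J\lceil\frac{k}{J}\rceil-k}{n}\right).$$ Equivalently, $\overline{r}\ge \alpha\lceil k/J\rceil+(1-\alpha)\lfloor k/J\rfloor$ with $\alpha=\frac1n\big(J\lceil k/J\rceil-k\big)\big(\lfloor k/J\rfloor+1\big)$.
   Context: For a codeword $\mathbf{y}=(y_1,\dots,y_n)\in\mathcal{C}$, the locality $\mathrm{Loc}(y_i)$ of the $i$-th symbol is the smallest size of a set $\mathcal{I}\subseteq[1,n]\setminus\{i\}$ such that there are scalars $\alpha_l\in\mathbb{F}_q$ with $y_i=\sum_{l\in\mathcal{I}}\alpha_l y_l$ for every codeword $\mathbf{y}\in\mathcal{C}$. The average locality is $\overline{r}=\frac1n\sum_{i=1}^n\mathrm{Loc}(y_i)$. Note $J\ge1$ by the Singleton bound $d\le n-k+1$. *)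

theory Defs
  imports Complex_Main "HOL-Library.Function_Algebras"
begin

text \<open>Words of length n over a field 'a are modelled as functions nat => 'a that
vanish outside {..<n}; the ambient space is a vector space under pointwise scaling.\<close>

definition cscale :: "'a::field \<Rightarrow> (nat \<Rightarrow> 'a) \<Rightarrow> (nat \<Rightarrow> 'a)" where
  "cscale c y = (\<lambda>i. c * y i)"

definition linear_code :: "nat \<Rightarrow> (nat \<Rightarrow> 'a::field) set \<Rightarrow> bool" where
  "linear_code n C \<longleftrightarrow> module.subspace cscale C \<and> (\<forall>y\<in>C. \<forall>i. n \<le> i \<longrightarrow> y i = 0)"

definition code_dim :: "(nat \<Rightarrow> 'a::field) set \<Rightarrow> nat" where
  "code_dim C = vector_space.dim cscale C"

definition hamming_dist :: "nat \<Rightarrow> (nat \<Rightarrow> 'a) \<Rightarrow> (nat \<Rightarrow> 'a) \<Rightarrow> nat" where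
  "hamming_dist n x y = card {i. i < n \<and> x i \<noteq> y i}"

definition min_dist :: "nat \<Rightarrow> (nat \<Rightarrow> 'a) set \<Rightarrow> nat" where
  "min_dist n C = Min {hamming_dist n x y | x y. x \<in> C \<and> y \<in> C \<and> x \<noteq> y}"

definition locality :: "nat \<Rightarrow> (nat \<Rightarrow> 'a::field) set \<Rightarrow> nat \<Rightarrow> nat" where
  "locality n C i = (LEAST m. \<exists>I \<alpha>. I \<subseteq> {..<n} - {i} \<and> card I = m \<and>
       (\<forall>y\<in>C. y i = (\<Sum>l\<in>I. \<alpha> l * y l)))"

definition avg_locality :: "nat \<Rightarrow> (nat \<Rightarrow> 'a::field) set \<Rightarrow> real" where
  "avg_locality n C = (\<Sum>i<n. real (locality n C i)) / real n"

end

theory Submission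
  imports Defs
begin

text \<open>Let \<open>D(T)\<close> be the dimension of the subcode vanishing on a set \<open>T\<close> of coordinates. Adding one
  coordinate to \<open>T\<close> lowers \<open>D\<close> by at most one, adding a coordinate together with one of its repair
  groups does not lower it at all, and a nonzero codeword vanishing on \<open>T\<close> gives the Singleton bound
  \<open>|T| + D(T) + d \<le> n + 1\<close> for the shortened code. Now grow \<open>T\<close> greedily, adding a remaining
  coordinate \<open>i\<close> of least locality \<open>\<rho>\<close> together with its repair group: the \<open>1 + a\<close> new
  coordinates all have locality at least \<open>\<rho>\<close>, while \<open>D\<close> drops by at most \<open>a\<close>. Balancing these
  contributions against the Singleton bound until \<open>D\<close> vanishes yields
  \<open>\<Sum>\<^sub>i r\<^sub>i \<ge> t (n + k - J t)\<close> for \<open>t = \<lceil>k/J\<rceil>\<close>, which is the claim after dividing by \<open>n\<close>.\<close>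

interpretation cs: vector_space "cscale :: 'a::field \<Rightarrow> (nat \<Rightarrow> 'a) \<Rightarrow> (nat \<Rightarrow> 'a)"
  by unfold_locales (auto simp: cscale_def algebra_simps fun_eq_iff)

text \<open>Deleting the coordinates in \<open>T\<close> from this subcode gives the code shortened at \<open>T\<close>.\<close>
definition shortened_code :: "(nat \<Rightarrow> 'a::zero) set \<Rightarrow> nat set \<Rightarrow> (nat \<Rightarrow> 'a) set" where
  "shortened_code C T = {y\<in>C. \<forall>i\<in>T. y i = 0}"

lemma cs_subspace_diff_scale:
  fixes C :: "(nat \<Rightarrow> 'a::field) set"
  assumes "cs.subspace C" "y \<in> C" "w \<in> C"
  shows "(\<lambda>l. y l - c * w l) \<in> C"
proof -
  have "(\<lambda>l. y l - c * w l) = y + cscale (-c) w" by (simp add: fun_eq_iff cscale_def)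
  then show ?thesis using assms cs.subspace_add cs.subspace_scale by metis
qed

lemma finite_words_vanishing_beyond:
  fixes C :: "(nat \<Rightarrow> 'a::{finite,zero}) set"
  assumes "\<forall>y\<in>C. \<forall>i. n \<le> i \<longrightarrow> y i = 0"
  shows "finite C"
proof -
  have "inj_on (\<lambda>y. map y [0..<n]) C"
  proof
    fix x y assume xy: "x \<in> C" "y \<in> C" "map x [0..<n] = map y [0..<n]"
    show "x = y"
    proof
      fix i show "x i = y i"
      proof (cases "i < n")
        case True then show ?thesis using xy(3) by (auto simp: map_eq_conv)
      next
        case False then show ?thesis using xy(1,2) assms by (metis not_less)
      qed
    qed
  qed
  moreover have "finite ((\<lambda>y. map y [0..<n]) ` C)"
    by (rule finite_subset[OF _ finite_lists_length_eq[of UNIV n]]) auto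
  ultimately show ?thesis by (rule finite_imageD[rotated])
qed

lemma cs_dim_pos_imp_nonzero:
  fixes V :: "(nat \<Rightarrow> 'a::field) set"
  assumes "cs.dim V \<ge> 1"
  obtains y where "y \<in> V" "y \<noteq> 0"
proof -
  have "\<not> V \<subseteq> cs.span {}"
  proof
    assume "V \<subseteq> cs.span {}"
    then have "cs.dim V \<le> card ({} :: (nat \<Rightarrow> 'a) set)" by (intro cs.dim_le_card) auto
    then show False using assms by simp
  qed
  then show ?thesis using that by auto
qed

lemma dim_shortened_code_le_insert:
  fixes C :: "(nat \<Rightarrow> 'a::field) set"
  assumes sub: "cs.subspace C" and fin: "finite C"
  shows "cs.dim (shortened_code C T) \<le> cs.dim (shortened_code C (insert j T)) + 1"
proof (cases "\<forall>y\<in>shortened_code C T. y j = 0")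
  case True
  then have "shortened_code C T = shortened_code C (insert j T)"
    unfolding shortened_code_def by auto
  then show ?thesis by simp
next
  case False
  then obtain w where w: "w \<in> shortened_code C T" "w j \<noteq> 0" by auto
  obtain B where B: "B \<subseteq> shortened_code C (insert j T)" "shortened_code C (insert j T) \<subseteq> cs.span B"
    "card B = cs.dim (shortened_code C (insert j T))"
    using cs.basis_exists[of "shortened_code C (insert j T)"] by metis
  have fB: "finite B" using B(1) fin unfolding shortened_code_def by (auto intro: finite_subset)
  have "shortened_code C T \<subseteq> cs.span (insert w B)"
  proof
    fix y assume y: "y \<in> shortened_code C T"
    define c where "c = y j / w j"
    define z where "z = (\<lambda>l. y l - c * w l)"
    have "z \<in> C" using cs_subspace_diff_scale[OF sub] y w unfolding z_def shortened_code_def by blast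
    moreover have "z j = 0" using w(2) unfolding z_def c_def by simp
    moreover have "\<forall>i\<in>T. z i = 0" using y w unfolding z_def shortened_code_def by simp
    ultimately have "z \<in> shortened_code C (insert j T)" unfolding shortened_code_def by simp
    then have "z \<in> cs.span (insert w B)" using B(2) cs.span_mono[of B "insert w B"] by blast
    moreover have "cscale c w \<in> cs.span (insert w B)" by (intro cs.span_scale cs.span_base) simp
    moreover have "y = z + cscale c w" unfolding z_def by (simp add: fun_eq_iff cscale_def)
    ultimately show "y \<in> cs.span (insert w B)" using cs.span_add by metis
  qed
  then have "cs.dim (shortened_code C T) \<le> card (insert w B)" using fB by (intro cs.dim_le_card) auto
  also have "\<dots> \<le> card B + 1" using fB by (simp add: card_insert_if)
  finally show ?thesis using B(3) by simp
qed

lemma card_zeros_add_min_dist_le: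
  fixes C :: "(nat \<Rightarrow> 'a::field) set"
  assumes lc: "linear_code n C" and md: "min_dist n C = d"
    and T: "T \<subseteq> {..<n}" and y: "y \<in> C" "y \<noteq> 0" "\<forall>i\<in>T. y i = 0"
  shows "card T + d \<le> n"
proof -
  let ?dists = "{hamming_dist n x y | x y. x \<in> C \<and> y \<in> C \<and> x \<noteq> (y :: nat \<Rightarrow> 'a)}"
  have "0 \<in> C" using lc cs.subspace_0 unfolding linear_code_def by blast
  then have "hamming_dist n y 0 \<in> ?dists" using y by blast
  moreover have "hamming_dist n x z \<le> n" for x z :: "nat \<Rightarrow> 'a"
    unfolding hamming_dist_def using card_mono[of "{..<n}" "{i. i < n \<and> x i \<noteq> z i}"] by auto
  then have "?dists \<subseteq> {..n}" by auto
  then have "finite ?dists" by (rule finite_subset) simp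
  ultimately have "d \<le> hamming_dist n y 0" unfolding md[symmetric] min_dist_def by (rule Min_le[rotated])
  also have "hamming_dist n y 0 \<le> card ({..<n} - T)"
    unfolding hamming_dist_def using y(3) by (intro card_mono) auto
  also have "\<dots> = n - card T" using T by (simp add: card_Diff_subset finite_subset)
  finally show ?thesis using card_mono[OF finite_lessThan T] by simp
qed

text \<open>Eliminating the coordinates of \<open>S\<close> one at a time, by subtracting a multiple of a word
  that is nonzero there.\<close>
lemma ex_linear_combination_if_vanishing:
  fixes V :: "(nat \<Rightarrow> 'a::field) set"
  assumes "finite S"
    and "\<forall>y\<in>V. \<forall>w\<in>V. \<forall>c. (\<lambda>l. y l - c * w l) \<in> V"
    and "\<forall>y\<in>V. (\<forall>l\<in>S. y l = 0) \<longrightarrow> y i = 0"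
  shows "\<exists>\<alpha>. \<forall>y\<in>V. y i = (\<Sum>l\<in>S. \<alpha> l * y l)"
  using assms
proof (induction S arbitrary: V rule: finite_induct)
  case empty then show ?case by auto
next
  case (insert s S)
  define V0 where "V0 = {y\<in>V. y s = 0}"
  have "\<forall>y\<in>V0. \<forall>w\<in>V0. \<forall>c. (\<lambda>l. y l - c * w l) \<in> V0" "\<forall>y\<in>V0. (\<forall>l\<in>S. y l = 0) \<longrightarrow> y i = 0"
    using insert.prems unfolding V0_def by auto
  then obtain \<beta> where \<beta>: "\<forall>y\<in>V0. y i = (\<Sum>l\<in>S. \<beta> l * y l)" using insert.IH by blast
  have sum_upd: "(\<Sum>l\<in>insert s S. (\<beta>(s := \<gamma>)) l * y l) = \<gamma> * y s + (\<Sum>l\<in>S. \<beta> l * y l)" for \<gamma> y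
  proof -
    have "(\<Sum>l\<in>S. (\<beta>(s := \<gamma>)) l * y l) = (\<Sum>l\<in>S. \<beta> l * y l)"
      using insert.hyps(2) by (intro sum.cong) auto
    then show ?thesis using insert.hyps by simp
  qed
  show ?case
  proof (cases "\<forall>y\<in>V. y s = 0")
    case True
    then have "\<forall>y\<in>V. y i = (\<Sum>l\<in>insert s S. (\<beta>(s := 0)) l * y l)"
      using \<beta> unfolding sum_upd V0_def by simp
    then show ?thesis by blast
  next
    case False
    then obtain w where w: "w \<in> V" "w s \<noteq> 0" by auto
    define \<gamma> where "\<gamma> = (w i - (\<Sum>l\<in>S. \<beta> l * w l)) / w s"
    have "y i = (\<Sum>l\<in>insert s S. (\<beta>(s := \<gamma>)) l * y l)" if y: "y \<in> V" for y
    proof -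
      define c where "c = y s / w s"
      have "(\<lambda>l. y l - c * w l) \<in> V" using insert.prems(1) y w(1) by blast
      moreover have "y s - c * w s = 0" unfolding c_def using w(2) by simp
      ultimately have "(\<lambda>l. y l - c * w l) \<in> V0" unfolding V0_def by simp
      then have "y i - c * w i = (\<Sum>l\<in>S. \<beta> l * (y l - c * w l))" using bspec[OF \<beta>] by simp
      also have "\<dots> = (\<Sum>l\<in>S. \<beta> l * y l) - c * (\<Sum>l\<in>S. \<beta> l * w l)"
        by (simp add: algebra_simps sum_subtractf sum_distrib_left)
      finally have "y i = (\<Sum>l\<in>S. \<beta> l * y l) + c * (w i - (\<Sum>l\<in>S. \<beta> l * w l))"
        by (simp add: algebra_simps)
      moreover have "c * (w i - (\<Sum>l\<in>S. \<beta> l * w l)) = \<gamma> * y s"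
        unfolding c_def \<gamma>_def using w(2) by simp
      ultimately show ?thesis unfolding sum_upd by simp
    qed
    then show ?thesis by blast
  qed
qed

lemma coordinate_linear_in_others:
  fixes C :: "(nat \<Rightarrow> 'a::field) set"
  assumes lc: "linear_code n C" and md: "min_dist n C = d" and "d \<ge> 2" and i: "i < n"
  shows "\<exists>\<alpha>. \<forall>y\<in>C. y i = (\<Sum>l\<in>{..<n} - {i}. \<alpha> l * y l)"
proof (rule ex_linear_combination_if_vanishing)
  show "\<forall>y\<in>C. \<forall>w\<in>C. \<forall>c. (\<lambda>l. y l - c * w l) \<in> C"
    using lc unfolding linear_code_def by (auto intro: cs_subspace_diff_scale)
  show "\<forall>y\<in>C. (\<forall>l\<in>{..<n} - {i}. y l = 0) \<longrightarrow> y i = 0"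
  proof (intro ballI impI, rule ccontr)
    fix y assume y: "y \<in> C" "\<forall>l\<in>{..<n} - {i}. y l = 0" "y i \<noteq> 0"
    then have "card ({..<n} - {i}) + d \<le> n"
      by (intro card_zeros_add_min_dist_le[OF lc md]) auto
    then show False using i \<open>d \<ge> 2\<close> by simp
  qed
qed simp

definition repair_group :: "nat \<Rightarrow> (nat \<Rightarrow> 'a::field) set \<Rightarrow> nat \<Rightarrow> nat set" where
  "repair_group n C i = (SOME I. \<exists>\<alpha>. I \<subseteq> {..<n} - {i} \<and> card I = locality n C i \<and>
       (\<forall>y\<in>C. y i = (\<Sum>l\<in>I. \<alpha> l * y l)))"

lemma repair_group:
  fixes C :: "(nat \<Rightarrow> 'a::field) set"
  assumes "linear_code n C" "min_dist n C = d" "d \<ge> 2" "i < n"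
  shows "repair_group n C i \<subseteq> {..<n} - {i}" "card (repair_group n C i) = locality n C i"
    and "\<exists>\<alpha>. \<forall>y\<in>C. y i = (\<Sum>l\<in>repair_group n C i. \<alpha> l * y l)"
proof -
  define P where "P m \<longleftrightarrow> (\<exists>I \<alpha>. I \<subseteq> {..<n} - {i} \<and> card I = m \<and>
       (\<forall>y\<in>C. y i = (\<Sum>l\<in>I. \<alpha> l * y l)))" for m
  have "P (card ({..<n} - {i}))"
    using coordinate_linear_in_others[OF assms] unfolding P_def by blast
  then have "P (locality n C i)" unfolding locality_def P_def[symmetric] by (rule LeastI)
  then have "\<exists>\<alpha>. repair_group n C i \<subseteq> {..<n} - {i} \<and> card (repair_group n C i) = locality n C i \<and>
       (\<forall>y\<in>C. y i = (\<Sum>l\<in>repair_group n C i. \<alpha> l * y l))"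
    unfolding P_def repair_group_def by (rule someI_ex)
  then show "repair_group n C i \<subseteq> {..<n} - {i}" "card (repair_group n C i) = locality n C i"
    and "\<exists>\<alpha>. \<forall>y\<in>C. y i = (\<Sum>l\<in>repair_group n C i. \<alpha> l * y l)"
    by blast+
qed

lemma terminal_step_inequality:
  fixes \<rho> h d D t :: int
  assumes "\<rho> \<ge> t" "\<rho> \<ge> D" "h \<ge> 0" "d \<ge> 1" "t \<ge> 1" "D \<ge> 0"
  shows "t * (d - 1 + 2 * D - t - h * (t - 1)) \<le> \<rho> * (h + d - 1 + D)"
proof -
  have "\<rho> * h \<ge> - (t * (h * (t - 1)))" using assms
    by (smt (verit) mult_nonneg_nonneg)
  moreover have "\<rho> * (d - 1) \<ge> t * (d - 1)" using assms by (simp add: mult_right_mono)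
  moreover have "\<rho> * D \<ge> 2 * t * D - t * t"
  proof (cases "D \<ge> t")
    case True
    have "\<rho> * D \<ge> D * D" using assms by (simp add: mult_right_mono)
    moreover have "(D - t) * (D - t) \<ge> 0" by simp
    ultimately show ?thesis by (simp add: algebra_simps)
  next
    case False
    have "\<rho> * D \<ge> t * D" using assms by (simp add: mult_right_mono)
    moreover have "t * D \<le> t * t" using False assms by (simp add: mult_left_mono)
    ultimately show ?thesis by (simp add: algebra_simps)
  qed
  ultimately show ?thesis by (simp add: algebra_simps)
qed

lemma greedy_step_inequality:
  fixes \<rho> a \<Delta> t :: int
  assumes "\<rho> \<ge> a" "a \<ge> \<Delta>" "a \<ge> 0" "t \<ge> 1"
  shows "2 * t * \<Delta> \<le> \<rho> * (1 + a) + t * (t - 1) * (1 + a - \<Delta>)"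
proof (cases "\<Delta> \<ge> 0")
  case True
  have "\<rho> * (1 + a) \<ge> a * (1 + a)" using assms by (simp add: mult_right_mono)
  moreover have "a * (1 + a) \<ge> \<Delta> * (1 + \<Delta>)" using assms True by (simp add: mult_mono)
  moreover have "t * (t - 1) * (1 + a - \<Delta>) \<ge> t * (t - 1)"
    using assms mult_left_mono[of 1 "1 + a - \<Delta>" "t * (t - 1)"] by simp
  moreover have "(\<Delta> - t) * (\<Delta> - t + 1) \<ge> 0"
    by (cases "\<Delta> \<ge> t") (simp_all add: mult_nonpos_nonpos)
  ultimately show ?thesis by (simp add: algebra_simps)
next
  case False
  have "\<rho> * (1 + a) \<ge> 0" "t * (t - 1) * (1 + a - \<Delta>) \<ge> 0" using assms False by simp_all
  moreover have "2 * t * \<Delta> \<le> 0" using assms False by (simp add: mult_nonneg_nonpos)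
  ultimately show ?thesis by linarith
qed

lemma ceiling_divide_bounds:
  fixes k J :: nat
  assumes "J \<ge> 1" "k \<ge> 1"
  shows "\<lceil>real k / real J\<rceil> \<ge> 1" "(\<lceil>real k / real J\<rceil> - 1) * int J < int k"
proof -
  show "\<lceil>real k / real J\<rceil> \<ge> 1" using assms by (simp add: divide_pos_pos)
  have "real_of_int (\<lceil>real k / real J\<rceil> - 1) * real J < real k"
    using assms ceiling_correct[of "real k / real J"] by (simp add: pos_less_divide_eq)
  then have "real_of_int ((\<lceil>real k / real J\<rceil> - 1) * int J) < real_of_int (int k)" by simp
  then show "(\<lceil>real k / real J\<rceil> - 1) * int J < int k" by (simp only: of_int_less_iff)
qed

text \<open>\<open>D T\<close> abstracts the dimension of the code shortened at \<open>T\<close>, and \<open>R i\<close> a repair group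
  of size \<open>r i\<close> for the coordinate \<open>i\<close>.\<close>
locale locality_profile =
  fixes n d :: nat and D :: "nat set \<Rightarrow> nat" and r :: "nat \<Rightarrow> nat" and R :: "nat \<Rightarrow> nat set"
  assumes D_le_D_insert: "T \<subseteq> {..<n} \<Longrightarrow> j < n \<Longrightarrow> D T \<le> D (insert j T) + 1"
    and card_add_min_dist_le: "T \<subseteq> {..<n} \<Longrightarrow> D T \<ge> 1 \<Longrightarrow> card T + d \<le> n"
    and repair_group_subset: "i < n \<Longrightarrow> R i \<subseteq> {..<n} - {i}"
    and card_repair_group: "i < n \<Longrightarrow> card (R i) = r i"
    and D_insert_repaired: "i < n \<Longrightarrow> R i \<subseteq> T \<Longrightarrow> T \<subseteq> {..<n} \<Longrightarrow> D (insert i T) = D T"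
    and min_dist_pos: "d \<ge> 1"
begin

lemma D_le_D_union:
  assumes "finite X" "X \<subseteq> {..<n}" "T \<subseteq> {..<n}"
  shows "D T \<le> D (T \<union> X) + card X"
  using assms
proof (induction X rule: finite_induct)
  case empty then show ?case by simp
next
  case (insert x F)
  then have "D T \<le> D (T \<union> F) + card F" "D (T \<union> F) \<le> D (insert x (T \<union> F)) + 1"
    using D_le_D_insert[of "T \<union> F" x] by auto
  then show ?case using insert by simp
qed

text \<open>Shortening at one more coordinate lowers \<open>D\<close> by at most one, so we may shorten until
  \<open>D = 1\<close> and then apply the weight bound.\<close>
lemma singleton_bound:
  assumes "T \<subseteq> {..<n}" "D T \<ge> 1"
  shows "card T + D T + d \<le> n + 1"
  using assms
proof (induction "n - card T" arbitrary: T rule: less_induct)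
  case less
  show ?case
  proof (cases "D T = 1")
    case True then show ?thesis using card_add_min_dist_le[OF less.prems] by simp
  next
    case False
    have "card T + d \<le> n" using card_add_min_dist_le[OF less.prems] .
    then have "card T < card {..<n}" using min_dist_pos by simp
    then obtain j where j: "j < n" "j \<notin> T"
      by (metis lessThan_iff less.prems(1) psubset_card_mono subsetI subset_antisym finite_lessThan less_irrefl)
    have T': "insert j T \<subseteq> {..<n}" and c: "card (insert j T) = card T + 1"
      using j less.prems(1) finite_subset[OF less.prems(1)] by auto
    have "D (insert j T) \<ge> 1" using D_le_D_insert[OF less.prems(1) j(1)] False less.prems(2) by linarith
    moreover have "n - card (insert j T) < n - card T" using c \<open>card T + d \<le> n\<close> min_dist_pos by simp
    ultimately have "card (insert j T) + D (insert j T) + d \<le> n + 1" using less.hyps T' by blast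
    then show ?thesis using D_le_D_insert[OF less.prems(1) j(1)] c by linarith
  qed
qed

lemma greedy_extension:
  assumes U: "U \<subseteq> {..<n}" and i: "i < n" "i \<notin> U"
  shows "insert i (U \<union> R i) \<subseteq> {..<n}" "insert i (U \<union> R i) - U = insert i (R i - U)"
    and "card (insert i (U \<union> R i)) = card U + 1 + card (R i - U)"
    and "D U \<le> D (insert i (U \<union> R i)) + card (R i - U)"
    and "card (R i - U) \<le> r i"
proof -
  have Ri: "R i \<subseteq> {..<n} - {i}" using repair_group_subset[OF i(1)] .
  show "insert i (U \<union> R i) \<subseteq> {..<n}" "insert i (U \<union> R i) - U = insert i (R i - U)"
    using U i Ri by auto
  have fin: "finite U" "finite (R i)" using U Ri by (auto intro: finite_subset)
  have "card (insert i (U \<union> R i)) = card (U \<union> R i) + 1" using fin i Ri by (auto simp: card_insert_if)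
  also have "U \<union> R i = U \<union> (R i - U)" by blast
  also have "card \<dots> = card U + card (R i - U)" using fin by (intro card_Un_disjoint) auto
  finally show "card (insert i (U \<union> R i)) = card U + 1 + card (R i - U)" by simp
  have "D U \<le> D (U \<union> (R i - U)) + card (R i - U)"
    by (rule D_le_D_union) (use fin U Ri in auto)
  also have "U \<union> (R i - U) = U \<union> R i" by blast
  also have "D (U \<union> R i) = D (insert i (U \<union> R i))"
    by (rule D_insert_repaired[symmetric]) (use i U Ri in auto)
  finally show "D U \<le> D (insert i (U \<union> R i)) + card (R i - U)" .
  show "card (R i - U) \<le> r i"
    using card_mono[OF fin(2), of "R i - U"] card_repair_group[OF i(1)] by auto
qed

lemma sum_remaining_ge_greedy_group:
  assumes U: "U \<subseteq> {..<n}" and i: "i < n" "i \<notin> U"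
    and i_min: "\<And>j. j \<in> {..<n} - U \<Longrightarrow> r i \<le> r j"
  shows "(1 + int (card (R i - U))) * int (r i) + (\<Sum>j\<in>{..<n} - insert i (U \<union> R i). int (r j))
           \<le> (\<Sum>j\<in>{..<n} - U. int (r j))"
proof -
  let ?G = "insert i (R i - U)" and ?U' = "insert i (U \<union> R i)"
  have Ri: "finite (R i)" "i \<notin> R i" using repair_group_subset[OF i(1)] by (auto intro: finite_subset)
  have "(1 + int (card (R i - U))) * int (r i) = (\<Sum>j\<in>?G. int (r i))" using Ri by simp
  also have "\<dots> \<le> (\<Sum>j\<in>?G. int (r j))"
    using greedy_extension(1)[OF U i] i(2) i_min by (intro sum_mono) auto
  finally have "(1 + int (card (R i - U))) * int (r i) \<le> (\<Sum>j\<in>?G. int (r j))" .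
  moreover have "(\<Sum>j\<in>{..<n} - U. int (r j)) = (\<Sum>j\<in>?G. int (r j)) + (\<Sum>j\<in>{..<n} - ?U'. int (r j))"
  proof -
    have "{..<n} - ?U' \<subseteq> {..<n} - U" by blast
    moreover have "({..<n} - U) - ({..<n} - ?U') = ?G" using greedy_extension(1,2)[OF U i] by blast
    ultimately show ?thesis using sum.subset_diff[of "{..<n} - ?U'" "{..<n} - U" "\<lambda>j. int (r j)"] by simp
  qed
  ultimately show ?thesis by linarith
qed

text \<open>The defect of the Singleton bound after shortening at \<open>U\<close>.\<close>
definition slack :: "nat set \<Rightarrow> int" where
  "slack U = int n + 1 - int d - int (card U) - int (D U)"

lemma slack_nonneg:
  assumes "U \<subseteq> {..<n}" "D U \<ge> 1"
  shows "slack U \<ge> 0"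
  using singleton_bound[OF assms] unfolding slack_def by linarith

lemma sum_remaining_locality_ge_of_lower_bound:
  assumes U: "U \<subseteq> {..<n}" and DU: "D U \<ge> 1" and t: "t \<ge> 1" "t \<le> \<rho>" and "D U \<le> \<rho>"
    and \<rho>: "\<And>j. j \<in> {..<n} - U \<Longrightarrow> \<rho> \<le> r j"
  shows "int t * (int d - 1 + 2 * int (D U) - int t - slack U * (int t - 1))
           \<le> (\<Sum>j\<in>{..<n} - U. int (r j))"
proof -
  have "card U + d \<le> n" using card_add_min_dist_le[OF U DU] .
  moreover have "card ({..<n} - U) = n - card U" using U by (simp add: card_Diff_subset finite_subset)
  ultimately have "int \<rho> * (slack U + int d - 1 + int (D U)) = (\<Sum>j\<in>{..<n} - U. int \<rho>)"
    unfolding slack_def by (simp add: algebra_simps)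
  also have "\<dots> \<le> (\<Sum>j\<in>{..<n} - U. int (r j))" using \<rho> by (intro sum_mono) auto
  finally have "int \<rho> * (slack U + int d - 1 + int (D U)) \<le> (\<Sum>j\<in>{..<n} - U. int (r j))" .
  moreover have "int t * (int d - 1 + 2 * int (D U) - int t - slack U * (int t - 1))
      \<le> int \<rho> * (slack U + int d - 1 + int (D U))"
    by (rule terminal_step_inequality) (use assms slack_nonneg[OF U DU] min_dist_pos in auto)
  ultimately show ?thesis by linarith
qed

text \<open>Greedy argument: shorten at a remaining coordinate \<open>i\<close> of least locality together with its
  repair group; each of the \<open>1 + a\<close> new coordinates has locality at least \<open>r i\<close>, while \<open>D\<close> drops
  by at most \<open>a\<close>. The second disjunct of the hypothesis excludes that the process stops at a
  coordinate of locality below \<open>t\<close>, and it is inherited by the next step.\<close>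
lemma sum_remaining_locality_ge:
  assumes "U \<subseteq> {..<n}" "D U \<ge> 1" "t \<ge> 1"
    and "(\<forall>j\<in>{..<n} - U. t \<le> r j) \<or> (int t - 1) * (slack U + 1) < int (D U)"
  shows "int t * (int d - 1 + 2 * int (D U) - int t - slack U * (int t - 1))
           \<le> (\<Sum>j\<in>{..<n} - U. int (r j))"
  using assms
proof (induction "n - card U" arbitrary: U rule: less_induct)
  case less
  note U = less.prems(1) and DU = less.prems(2) and t = less.prems(3)
  have "card U + d \<le> n" using card_add_min_dist_le[OF U DU] .
  then have "{..<n} - U \<noteq> {}"
    using min_dist_pos card_mono[OF finite_subset[OF U], of "{..<n}"] by auto
  then obtain i where "is_arg_min r (\<lambda>j. j \<in> {..<n} - U) i"
    using ex_is_arg_min_if_finite[of "{..<n} - U" r] by blast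
  then have i: "i < n" "i \<notin> U" and i_min: "\<And>j. j \<in> {..<n} - U \<Longrightarrow> r i \<le> r j"
    unfolding is_arg_min_linorder by auto
  define a where "a = card (R i - U)"
  define U' where "U' = insert i (U \<union> R i)"
  have U': "U' \<subseteq> {..<n}" "card U' = card U + 1 + a" "D U \<le> D U' + a" and a_le: "a \<le> r i"
    using greedy_extension[OF U i] unfolding U'_def a_def by auto
  have group: "(1 + int a) * int (r i) + (\<Sum>j\<in>{..<n} - U'. int (r j)) \<le> (\<Sum>j\<in>{..<n} - U. int (r j))"
    using sum_remaining_ge_greedy_group[OF U i i_min] unfolding U'_def a_def .
  have t_cases: "t \<le> r i \<or> (int t - 1) * (slack U + 1) < int (D U)" using less.prems(4) i by auto
  show ?case
  proof (cases "D U' = 0")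
    case True
    then have DU_le: "D U \<le> r i" using U' a_le by simp
    have "t \<le> r i"
    proof (rule ccontr)
      assume "\<not> t \<le> r i"
      then have "(int t - 1) * (slack U + 1) < int (D U)" using t_cases by simp
      moreover have "int t - 1 \<le> (int t - 1) * (slack U + 1)"
        using slack_nonneg[OF U DU] t mult_left_mono[of 1 "slack U + 1" "int t - 1"] by simp
      ultimately show False using DU_le \<open>\<not> t \<le> r i\<close> by linarith
    qed
    then show ?thesis using sum_remaining_locality_ge_of_lower_bound[OF U DU t _ DU_le i_min] by blast
  next
    case False
    define \<Delta> where "\<Delta> = int (D U) - int (D U')"
    have slack': "slack U' = slack U - 1 - int a + \<Delta>" unfolding slack_def \<Delta>_def using U' by simp
    have \<Delta>_le: "\<Delta> \<le> int a" using U' unfolding \<Delta>_def by linarith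
    have "(\<forall>j\<in>{..<n} - U'. t \<le> r j) \<or> (int t - 1) * (slack U' + 1) < int (D U')"
    proof (cases "t \<le> r i")
      case True
      then show ?thesis using i_min unfolding U'_def by fastforce
    next
      case False
      then have "(int t - 1) * (slack U + 1) < int (D U)" using t_cases by simp
      moreover have "(int t - 1) * (slack U' + 1) \<le> (int t - 1) * slack U"
        using slack' \<Delta>_le t by (simp add: mult_left_mono)
      moreover have "\<Delta> \<le> int t - 1" using \<Delta>_le a_le False by linarith
      ultimately show ?thesis unfolding \<Delta>_def by (simp add: algebra_simps)
    qed
    moreover have "n - card U' < n - card U" using U' card_mono[OF finite_lessThan U'(1)] by simp
    ultimately have IH: "int t * (int d - 1 + 2 * int (D U') - int t - slack U' * (int t - 1))
        \<le> (\<Sum>j\<in>{..<n} - U'. int (r j))"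
      using less.hyps U'(1) False t by simp
    have "2 * int t * \<Delta> \<le> int (r i) * (1 + int a) + int t * (int t - 1) * (1 + int a - \<Delta>)"
      by (rule greedy_step_inequality) (use a_le \<Delta>_le t in auto)
    moreover have "(1 + int a) * int (r i)
        + int t * (int d - 1 + 2 * int (D U') - int t - slack U' * (int t - 1))
        \<le> (\<Sum>j\<in>{..<n} - U. int (r j))"
      using group IH by linarith
    moreover have "int (D U') = int (D U) - \<Delta>" unfolding \<Delta>_def by simp
    ultimately show ?thesis using slack' by (simp add: algebra_simps)
  qed
qed

lemma sum_locality_ge:
  assumes "D {} = k" "k \<ge> 1" "t \<ge> 1" "(int t - 1) * (int n + 2 - int k - int d) < int k"
  shows "int t * (int n + int k - (int n + 2 - int k - int d) * int t) \<le> (\<Sum>i<n. int (r i))"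
proof -
  have "(int t - 1) * (slack {} + 1) < int (D {})"
    using assms unfolding slack_def by (simp add: algebra_simps)
  then have "int t * (int d - 1 + 2 * int (D {}) - int t - slack {} * (int t - 1))
      \<le> (\<Sum>i\<in>{..<n} - {}. int (r i))"
    using sum_remaining_locality_ge[of "{}" t] assms by auto
  moreover have "int t * (int d - 1 + 2 * int (D {}) - int t - slack {} * (int t - 1))
      = int t * (int n + int k - (int n + 2 - int k - int d) * int t)"
    using assms(1) unfolding slack_def by (simp add: algebra_simps)
  ultimately show ?thesis by simp
qed

end

lemma locality_profile_code:
  fixes C :: "(nat \<Rightarrow> 'a::{finite,field}) set"
  assumes lc: "linear_code n C" and md: "min_dist n C = d" and d: "d \<ge> 2"
  shows "locality_profile n d (\<lambda>T. cs.dim (shortened_code C T)) (locality n C) (repair_group n C)"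
proof
  have sub: "cs.subspace C" and fin: "finite C"
    using lc finite_words_vanishing_beyond unfolding linear_code_def by auto
  show "cs.dim (shortened_code C T) \<le> cs.dim (shortened_code C (insert j T)) + 1" for T j
    by (rule dim_shortened_code_le_insert[OF sub fin])
  show "card T + d \<le> n" if T: "T \<subseteq> {..<n}" and dim: "cs.dim (shortened_code C T) \<ge> 1" for T
  proof -
    obtain y where "y \<in> shortened_code C T" "y \<noteq> 0" using cs_dim_pos_imp_nonzero[OF dim] .
    then show ?thesis
      using card_zeros_add_min_dist_le[OF lc md T] unfolding shortened_code_def by blast
  qed
  show "repair_group n C i \<subseteq> {..<n} - {i}" "card (repair_group n C i) = locality n C i"
    if "i < n" for i
    using repair_group[OF lc md d that] by auto
  show "cs.dim (shortened_code C (insert i T)) = cs.dim (shortened_code C T)"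
    if i: "i < n" and RT: "repair_group n C i \<subseteq> T" for i T
  proof -
    obtain \<alpha> where \<alpha>: "\<forall>y\<in>C. y i = (\<Sum>l\<in>repair_group n C i. \<alpha> l * y l)"
      using repair_group(3)[OF lc md d i] by blast
    have "y i = 0" if "y \<in> shortened_code C T" for y
    proof -
      have "y i = (\<Sum>l\<in>repair_group n C i. \<alpha> l * y l)"
        using \<alpha> that unfolding shortened_code_def by blast
      also have "\<dots> = 0" using that RT unfolding shortened_code_def by (intro sum.neutral) auto
      finally show ?thesis .
    qed
    then have "shortened_code C (insert i T) = shortened_code C T"
      unfolding shortened_code_def by auto
    then show ?thesis by simp
  qed
  show "d \<ge> 1" using d by simp
qed

theorem theorem1:
  fixes C :: "(nat \<Rightarrow> 'a::{finite,field}) set" and n k d J :: nat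
  assumes "linear_code n C"
    and "code_dim C = k" and "k \<ge> 1"
    and "min_dist n C = d" and "d \<ge> 2"
    and "J = n + 2 - k - d"
  shows "avg_locality n C \<ge>
    of_int \<lceil>real k / real J\<rceil> *
      (1 - (real J * of_int \<lceil>real k / real J\<rceil> - real k) / real n)"
proof -
  interpret locality_profile n d "\<lambda>T. cs.dim (shortened_code C T)" "locality n C" "repair_group n C"
    using locality_profile_code assms(1,4,5) by blast
  have Dk: "cs.dim (shortened_code C {}) = k"
    using assms(2) unfolding shortened_code_def code_dim_def by simp
  have "k + d \<le> n + 1" using singleton_bound[of "{}"] Dk assms(3) by simp
  then have J: "int J = int n + 2 - int k - int d" "J \<ge> 1" using assms(6) by auto
  define t where "t = \<lceil>real k / real J\<rceil>"
  have t: "t \<ge> 1" "(t - 1) * int J < int k"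
    unfolding t_def using ceiling_divide_bounds J(2) assms(3) by auto
  have "t * (int n + int k - int J * t) \<le> (\<Sum>i<n. int (locality n C i))"
    using sum_locality_ge[OF Dk assms(3), of "nat t"] t J by simp
  then have "real_of_int (t * (int n + int k - int J * t))
      \<le> real_of_int (\<Sum>i<n. int (locality n C i))"
    by (simp only: of_int_le_iff)
  then have sum_ge: "real_of_int t * (real n + real k - real J * real_of_int t)
      \<le> (\<Sum>i<n. real (locality n C i))"
    by simp
  have "real n > 0" using \<open>k + d \<le> n + 1\<close> assms(3,5) by simp
  then have "real_of_int t * (1 - (real J * real_of_int t - real k) / real n)
      = real_of_int t * (real n + real k - real J * real_of_int t) / real n"
    by (simp add: field_simps)
  also have "\<dots> \<le> avg_locality n C"
    unfolding avg_locality_def using sum_ge \<open>real n > 0\<close> by (simp add: divide_right_mono)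
  finally show ?thesis unfolding t_def .
qed

end
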